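(* Let $\Delta$ be a local derivation of $\mathcal{S}$ with $\Delta(L_0)=0$, and let $m\in\mathbb{Z}\setminus\{0\}$. Then $\Delta(L_m)$ lies in the span of $\{L_{km},G_{km}: k\in\mathbb{Z}\}$; i.e. when $\Delta(L_m)$ is written in the basis $\{L_n,G_n\}$, only basis elements with index divisible by $m$ occur with nonzero coefficient.
   Context: $\mathcal{S}$ is the centerless super Virasoro algebra: the Lie superalgebra over $\mathbb{C}$ with basis $\{L_m,G_n: m,n\in\mathbb{Z}\}$, $L_m$ even, $G_n$ odd, and brackets $[L_m,L_n]=(m-n)L_{m+n}$, $[L_m,G_r]=(\frac m2-r)G_{m+r}$, $[G_r,G_s]=2L_{r+s}$. A homogeneous linear map $D$ of parity $|D|$ is a derivation if $D([x,y])=[D(x),y]+(-1)^{|D||x|}[x,D(y)]$ for homogeneous $x,y$; derivations are sums of even and odd ones. A linear map $\Delta:\mathcal{S}\to\mathcal{S}$ is a local derivation if for every $x$ there is a derivation $D_x$ with $\Delta(x)=D_x(x)$. *)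

theory Defs
  imports Complex_Main
begin

text \<open>Elements of the centerless super Virasoro algebra S are represented by their
coefficient functions: x = (a, b) stands for sum_n a n L_n + sum_n b n G_n, with
finitely supported a and b.\<close>

type_synonym sv = "(int \<Rightarrow> complex) \<times> (int \<Rightarrow> complex)"

definition sv_space :: "sv set" where
  "sv_space = {x. finite {n. fst x n \<noteq> 0} \<and> finite {n. snd x n \<noteq> 0}}"

definition sv_zero :: sv where
  "sv_zero = ((\<lambda>n. 0), (\<lambda>n. 0))"

definition sv_add :: "sv \<Rightarrow> sv \<Rightarrow> sv" where
  "sv_add x y = ((\<lambda>n. fst x n + fst y n), (\<lambda>n. snd x n + snd y n))"

definition sv_scale :: "complex \<Rightarrow> sv \<Rightarrow> sv" where
  "sv_scale c x = ((\<lambda>n. c * fst x n), (\<lambda>n. c * snd x n))"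

definition Lb :: "int \<Rightarrow> sv" where
  "Lb m = ((\<lambda>n. if n = m then 1 else 0), (\<lambda>n. 0))"

definition Gb :: "int \<Rightarrow> sv" where
  "Gb m = ((\<lambda>n. 0), (\<lambda>n. if n = m then 1 else 0))"

text \<open>The bracket, extended bilinearly from
 [L_m,L_n]=(m-n)L_{m+n}, [L_m,G_r]=(m/2-r)G_{m+r}, [G_r,L_m]=-(m/2-r)G_{m+r},
 [G_r,G_s]=2L_{r+s}.\<close>
definition sv_br :: "sv \<Rightarrow> sv \<Rightarrow> sv" where
  "sv_br x y =
    ((\<lambda>n. (\<Sum>i\<in>{i. fst x i \<noteq> 0}. fst x i * fst y (n - i) * of_int (i - (n - i)))
         + (\<Sum>r\<in>{r. snd x r \<noteq> 0}. 2 * snd x r * snd y (n - r))),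
     (\<lambda>n. (\<Sum>i\<in>{i. fst x i \<noteq> 0}. fst x i * snd y (n - i) * (of_int i / 2 - of_int (n - i)))
         + (\<Sum>r\<in>{r. snd x r \<noteq> 0}. snd x r * fst y (n - r) * (of_int r - of_int (n - r) / 2))))"

definition sv_homog :: "sv \<Rightarrow> nat \<Rightarrow> bool" where
  "sv_homog x p \<longleftrightarrow> (p = 0 \<and> snd x = (\<lambda>n. 0)) \<or> (p = 1 \<and> fst x = (\<lambda>n. 0))"

definition sv_linear :: "(sv \<Rightarrow> sv) \<Rightarrow> bool" where
  "sv_linear D \<longleftrightarrow> (\<forall>x\<in>sv_space. D x \<in> sv_space) \<and>
     (\<forall>x\<in>sv_space. \<forall>y\<in>sv_space. \<forall>a b.
        D (sv_add (sv_scale a x) (sv_scale b y)) = sv_add (sv_scale a (D x)) (sv_scale b (D y)))"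

definition sv_homog_deriv :: "(sv \<Rightarrow> sv) \<Rightarrow> nat \<Rightarrow> bool" where
  "sv_homog_deriv D p \<longleftrightarrow> p \<in> {0, 1} \<and> sv_linear D \<and>
     (\<forall>x\<in>sv_space. \<forall>q\<in>{0, 1}. sv_homog x q \<longrightarrow> sv_homog (D x) ((p + q) mod 2)) \<and>
     (\<forall>x\<in>sv_space. \<forall>y\<in>sv_space. \<forall>q\<in>{0, 1}. \<forall>q'\<in>{0, 1}.
        sv_homog x q \<longrightarrow> sv_homog y q' \<longrightarrow>
        D (sv_br x y) = sv_add (sv_br (D x) y) (sv_scale ((-1) ^ (p * q)) (sv_br x (D y))))"

definition sv_derivation :: "(sv \<Rightarrow> sv) \<Rightarrow> bool" where
  "sv_derivation D \<longleftrightarrow> (\<exists>D0 D1. sv_homog_deriv D0 0 \<and> sv_homog_deriv D1 1 \<and>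
     (\<forall>x\<in>sv_space. D x = sv_add (D0 x) (D1 x)))"

definition sv_local_derivation :: "(sv \<Rightarrow> sv) \<Rightarrow> bool" where
  "sv_local_derivation \<Delta> \<longleftrightarrow> sv_linear \<Delta> \<and>
     (\<forall>x\<in>sv_space. \<exists>D. sv_derivation D \<and> \<Delta> x = D x)"

end

theory Submission
  imports Defs "HOL-Computational_Algebra.Polynomial"
begin

text \<open>
  Bracketing with L_0 shows that every derivation D satisfies, with u = D(L_0),
  (n - j) D(L_j)_n = (n - 2j) u_{n-j} on the even part and 2(n - j) D(L_j)_n = (2n - 3j) u_{n-j}
  on the odd part. Since \<Delta>(L_0) = 0, comparing \<Delta> with a derivation on L_0 + c L_m (c \<noteq> 0)
  links the coefficients of \<Delta>(L_m) along a residue class n + \<int>m to a finitely supported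
  sequence u depending on c, by a two-term recurrence. Solving it, u is c times a polynomial in c
  whose coefficients are the coefficients of \<Delta>(L_m) up to nonzero factors; finite support of u
  for infinitely many c forces this polynomial to vanish. If m does not divide n, the
  recurrence coefficients are nonzero, except for the odd part at n = 3m/2. That class is split
  there: above 3m/2 the recurrence starts at 3m/2 itself, below it one compares on c L_m + L_2m
  instead, the L_2m-part being already known to vanish on this class.
\<close>

section \<open>Linear recurrences with a free parameter\<close>

lemma finite_nonzero_comp_inj:
  assumes "finite {n. f n \<noteq> 0}" "inj g"
  shows "finite {k. f (g k) \<noteq> 0}"
proof -
  have "{k. f (g k) \<noteq> 0} = g -` {n. f n \<noteq> 0}" by auto
  then show ?thesis using finite_vimageI[OF assms] by simp
qed

text \<open>The solution U of the recurrence in \<open>parametric_recurrence_vanishes_nat\<close>, divided by c,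
  as a polynomial in c.\<close>
primrec recurrence_poly ::
  "(nat \<Rightarrow> 'a::field) \<Rightarrow> (nat \<Rightarrow> 'a) \<Rightarrow> (nat \<Rightarrow> 'a) \<Rightarrow> nat \<Rightarrow> 'a poly" where
  "recurrence_poly A \<alpha> \<beta> 0 = [:A 0 / \<alpha> 0:]"
| "recurrence_poly A \<alpha> \<beta> (Suc k) =
     [:A (Suc k) / \<alpha> (Suc k):]
     - smult (\<beta> (Suc k) / \<alpha> (Suc k)) (pCons 0 (recurrence_poly A \<alpha> \<beta> k))"

lemma recurrence_poly_eq_0_imp:
  assumes "\<And>k. \<alpha> k \<noteq> 0" "\<And>k. \<beta> (Suc k) \<noteq> 0"
    and "recurrence_poly A \<alpha> \<beta> k = 0" "i \<le> k"
  shows "A i = 0"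
  using assms(3,4)
proof (induction k)
  case 0
  then show ?case using assms(1)[of 0] by simp
next
  case (Suc k)
  have "coeff (recurrence_poly A \<alpha> \<beta> (Suc k)) 0 = 0" using Suc.prems(1) by simp
  then have A: "A (Suc k) = 0" using assms(1)[of "Suc k"] by simp
  then have "recurrence_poly A \<alpha> \<beta> k = 0"
    using Suc.prems(1) assms(1)[of "Suc k"] assms(2)[of k] by simp
  with Suc.IH A Suc.prems(2) show ?case by (cases "i = Suc k") auto
qed

lemma recurrence_solution_eq_poly:
  assumes "\<And>k. \<alpha> k \<noteq> 0"
    and "c * A 0 = \<alpha> 0 * U 0"
    and "\<And>k. c * A (Suc k) = \<alpha> (Suc k) * U (Suc k) + c * \<beta> (Suc k) * U k"
  shows "U k = c * poly (recurrence_poly A \<alpha> \<beta> k) c"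
proof (induction k)
  case 0
  then show ?case using assms(1,2) by (simp add: field_simps)
next
  case (Suc k)
  have "U (Suc k) = (c * A (Suc k) - c * \<beta> (Suc k) * U k) / \<alpha> (Suc k)"
    using assms(1,3) by (simp add: field_simps)
  with Suc.IH assms(1) show ?case by (simp add: field_simps)
qed

text \<open>Beyond the support of A the recurrence is homogeneous with nonzero coefficients, so a
  nonzero value would propagate forever.\<close>
lemma recurrence_solution_vanishes_beyond:
  fixes U :: "nat \<Rightarrow> 'a::field"
  assumes "finite {k. U k \<noteq> 0}" "c \<noteq> 0" "\<And>k. \<alpha> k \<noteq> 0" "\<And>k. \<beta> (Suc k) \<noteq> 0"
    and "\<And>k. k > N \<Longrightarrow> A k = 0"
    and "\<And>k. c * A (Suc k) = \<alpha> (Suc k) * U (Suc k) + c * \<beta> (Suc k) * U k"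
  shows "U N = 0"
proof (rule ccontr)
  assume "U N \<noteq> 0"
  have "U (N + i) \<noteq> 0" for i
  proof (induction i)
    case 0
    then show ?case using \<open>U N \<noteq> 0\<close> by simp
  next
    case (Suc i)
    have "\<alpha> (Suc (N + i)) * U (Suc (N + i)) = - (c * \<beta> (Suc (N + i)) * U (N + i))"
      using assms(5)[of "Suc (N + i)"] assms(6)[of "N + i"] by (simp add: eq_neg_iff_add_eq_0)
    moreover have "c * \<beta> (Suc (N + i)) * U (N + i) \<noteq> 0" using assms(2,4) Suc.IH by simp
    ultimately show ?case by auto
  qed
  then have "{N..} \<subseteq> {k. U k \<noteq> 0}" by (auto simp: le_iff_add)
  then show False using assms(1) finite_subset infinite_Ici by blast
qed

theorem parametric_recurrence_vanishes_nat:
  fixes A \<alpha> \<beta> :: "nat \<Rightarrow> 'a::field_char_0"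
  assumes "finite {k. A k \<noteq> 0}" "\<And>k. \<alpha> k \<noteq> 0" "\<And>k. \<beta> (Suc k) \<noteq> 0"
    and "\<And>c. c \<noteq> 0 \<Longrightarrow> \<exists>U. finite {k. U k \<noteq> 0} \<and> c * A 0 = \<alpha> 0 * U 0 \<and>
           (\<forall>k. c * A (Suc k) = \<alpha> (Suc k) * U (Suc k) + c * \<beta> (Suc k) * U k)"
  shows "A k = 0"
proof -
  obtain N where N: "k \<le> N" "\<And>i. i > N \<Longrightarrow> A i = 0"
  proof -
    obtain B where "\<And>i. A i \<noteq> 0 \<Longrightarrow> i \<le> B"
      using assms(1) finite_nat_set_iff_bounded_le by auto
    then show ?thesis using that[of "max k B"] by fastforce
  qed
  let ?P = "recurrence_poly A \<alpha> \<beta> N"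
  have roots: "poly ?P c = 0" if c: "c \<noteq> 0" for c
  proof -
    obtain U where U: "finite {k. U k \<noteq> 0}" "c * A 0 = \<alpha> 0 * U 0"
      "\<And>k. c * A (Suc k) = \<alpha> (Suc k) * U (Suc k) + c * \<beta> (Suc k) * U k"
      using assms(4)[OF c] by blast
    have "U N = 0"
      by (rule recurrence_solution_vanishes_beyond[where A = A and \<alpha> = \<alpha> and \<beta> = \<beta>,
            OF U(1) c assms(2,3) N(2) U(3)])
    then show ?thesis using recurrence_solution_eq_poly[where \<beta> = \<beta>, OF assms(2) U(2,3), of N] c
      by simp
  qed
  have "?P = 0"
  proof (rule ccontr)
    assume "?P \<noteq> 0"
    then have "finite {c. poly ?P c = 0}" by (rule poly_roots_finite)
    moreover have "UNIV - {0} \<subseteq> {c. poly ?P c = 0}" using roots by auto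
    ultimately have "finite (UNIV - {0} :: 'a set)" using finite_subset by blast
    then show False using infinite_UNIV_char_0[where 'a = 'a] by simp
  qed
  then show ?thesis
    using recurrence_poly_eq_0_imp[where \<alpha> = \<alpha> and \<beta> = \<beta>, OF assms(2,3)] N(1) by blast
qed

theorem parametric_recurrence_vanishes_int:
  fixes A \<alpha> \<beta> :: "int \<Rightarrow> 'a::field_char_0"
  assumes "finite {j. A j \<noteq> 0}" "\<And>j. \<alpha> j \<noteq> 0" "\<And>j. \<beta> j \<noteq> 0"
    and "\<And>c. c \<noteq> 0 \<Longrightarrow> \<exists>U. finite {j. U j \<noteq> 0} \<and>
           (\<forall>j. c * A j = \<alpha> j * U j + c * \<beta> j * U (j - 1))"
  shows "A j = 0"
proof -
  obtain J0 where J0: "J0 \<le> j" "\<And>i. i < J0 \<Longrightarrow> A i = 0"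
  proof -
    obtain M where "\<And>i. A i \<noteq> 0 \<Longrightarrow> M \<le> i"
      using bdd_below_finite[OF assms(1)] by (auto simp: bdd_below_def)
    then show ?thesis using that[of "min j M"] by fastforce
  qed
  let ?shift = "\<lambda>k::nat. J0 + int k"
  have "inj ?shift" by (auto simp: inj_def)
  have "A (?shift k) = 0" for k
  proof (rule parametric_recurrence_vanishes_nat[where \<alpha> = "\<alpha> \<circ> ?shift" and \<beta> = "\<beta> \<circ> ?shift"],
      goal_cases)
    case 1
    show ?case by (rule finite_nonzero_comp_inj[OF assms(1) \<open>inj ?shift\<close>])
  next
    case (4 c)
    then obtain U where U: "finite {j. U j \<noteq> 0}"
      "\<And>j. c * A j = \<alpha> j * U j + c * \<beta> j * U (j - 1)"
      using assms(4) by blast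
    have U_below: "U i = 0" if "i < J0" for i
    proof (rule ccontr)
      assume "U i \<noteq> 0"
      have "U (i - int k) \<noteq> 0" for k
      proof (induction k)
        case 0
        then show ?case using \<open>U i \<noteq> 0\<close> by simp
      next
        case (Suc k)
        have "\<alpha> (i - int k) * U (i - int k) = - (c * \<beta> (i - int k) * U (i - int k - 1))"
          using U(2)[of "i - int k"] J0(2)[of "i - int k"] that by (simp add: eq_neg_iff_add_eq_0)
        then show ?case using Suc.IH assms(2) by (auto simp: algebra_simps)
      qed
      then have "range (\<lambda>k. i - int k) \<subseteq> {j. U j \<noteq> 0}" by auto
      moreover have "inj (\<lambda>k. i - int k)" by (auto simp: inj_def)
      ultimately show False using U(1) finite_subset range_inj_infinite by blast
    qed
    show ?case
    proof (intro exI[of _ "U \<circ> ?shift"] conjI allI, goal_cases)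
      case 1
      show ?case using finite_nonzero_comp_inj[OF U(1) \<open>inj ?shift\<close>] by simp
    next
      case 2
      show ?case using U(2)[of J0] U_below[of "J0 - 1"] by simp
    next
      case (3 k)
      show ?case using U(2)[of "?shift (Suc k)"] by simp
    qed
  qed (use assms(2,3) in auto)
  from this[of "nat (j - J0)"] show ?thesis using J0(1) by simp
qed

lemma parametric_recurrence_vanishes_progression:
  fixes f :: "int \<Rightarrow> 'a::field_char_0" and a b :: "int \<Rightarrow> int"
  assumes "finite {k. f k \<noteq> 0}" "m \<noteq> 0"
    and "\<And>j. a (n + j * m) \<noteq> 0" "\<And>j. b (n + j * m) \<noteq> 0"
    and "\<And>c. c \<noteq> 0 \<Longrightarrow> \<exists>u. finite {k. u k \<noteq> 0} \<and>
           (\<forall>k. c * (of_int (a k) * f k) = of_int (a k) * u k + c * of_int (b k) * u (k - m))"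
  shows "f n = 0"
proof -
  let ?p = "\<lambda>j. n + j * m"
  have "inj ?p" using assms(2) by (auto simp: inj_def)
  have "of_int (a (?p 0)) * f (?p 0) = 0"
  proof (rule parametric_recurrence_vanishes_int[where A = "\<lambda>j. of_int (a (?p j)) * f (?p j)"
        and \<alpha> = "\<lambda>j. of_int (a (?p j))" and \<beta> = "\<lambda>j. of_int (b (?p j))" and j = 0], goal_cases)
    case 1
    have "{j. of_int (a (?p j)) * f (?p j) \<noteq> 0} \<subseteq> {j. f (?p j) \<noteq> 0}" by auto
    then show ?case using finite_nonzero_comp_inj[OF assms(1) \<open>inj ?p\<close>] finite_subset by blast
  next
    case (4 c)
    then obtain u where u: "finite {k. u k \<noteq> 0}"
      "\<And>k. c * (of_int (a k) * f k) = of_int (a k) * u k + c * of_int (b k) * u (k - m)"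
      using assms(5) by blast
    have "c * (of_int (a (?p j)) * f (?p j)) =
        of_int (a (?p j)) * u (?p j) + c * of_int (b (?p j)) * u (?p (j - 1))" for j
    proof -
      have "?p j - m = ?p (j - 1)" by (simp add: algebra_simps)
      then show ?thesis using u(2)[of "?p j"] by (simp only:)
    qed
    then show ?case using finite_nonzero_comp_inj[OF u(1) \<open>inj ?p\<close>]
      by (intro exI[of _ "u \<circ> ?p"]) auto
  qed (use assms(3,4) in auto)
  then show ?thesis using assms(3)[of 0] by simp
qed

section \<open>Derivations of the super Virasoro algebra on the basis elements L_j\<close>

lemma sv_space_finite_support:
  assumes "x \<in> sv_space"
  shows "finite {n. fst x n \<noteq> 0}" "finite {n. snd x n \<noteq> 0}"
  using assms by (simp_all add: sv_space_def)

lemma Lb_in_sv_space: "Lb j \<in> sv_space"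
proof -
  have "{n. fst (Lb j) n \<noteq> 0} = {j}" "{n. snd (Lb j) n \<noteq> 0} = {}" by (auto simp: Lb_def)
  then show ?thesis by (simp add: sv_space_def)
qed

lemma sv_lin_comb_in_sv_space:
  assumes "x \<in> sv_space" "y \<in> sv_space"
  shows "sv_add (sv_scale a x) (sv_scale b y) \<in> sv_space"
proof -
  let ?z = "sv_add (sv_scale a x) (sv_scale b y)"
  have "{n. fst ?z n \<noteq> 0} \<subseteq> {n. fst x n \<noteq> 0} \<union> {n. fst y n \<noteq> 0}"
    "{n. snd ?z n \<noteq> 0} \<subseteq> {n. snd x n \<noteq> 0} \<union> {n. snd y n \<noteq> 0}"
    by (auto simp: sv_add_def sv_scale_def)
  with assms show ?thesis unfolding sv_space_def by (auto intro: finite_subset)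
qed

lemma sv_linear_in_sv_space: "sv_linear D \<Longrightarrow> x \<in> sv_space \<Longrightarrow> D x \<in> sv_space"
  by (simp add: sv_linear_def)

lemma sv_linear_lin_comb:
  "sv_linear D \<Longrightarrow> x \<in> sv_space \<Longrightarrow> y \<in> sv_space \<Longrightarrow>
    D (sv_add (sv_scale a x) (sv_scale b y)) = sv_add (sv_scale a (D x)) (sv_scale b (D y))"
  by (simp add: sv_linear_def)

lemma sv_linear_scale:
  assumes "sv_linear D" "x \<in> sv_space"
  shows "D (sv_scale a x) = sv_scale a (D x)"
proof -
  have "\<And>w. sv_add (sv_scale a w) (sv_scale 0 w) = sv_scale a w"
    by (simp add: sv_add_def sv_scale_def)
  then show ?thesis using sv_linear_lin_comb[OF assms assms(2), of a 0] by simp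
qed

lemma sv_derivation_lin_comb:
  assumes "sv_derivation D" "x \<in> sv_space" "y \<in> sv_space"
  shows "D (sv_add (sv_scale a x) (sv_scale b y)) = sv_add (sv_scale a (D x)) (sv_scale b (D y))"
proof -
  obtain D0 D1 where D: "sv_homog_deriv D0 0" "sv_homog_deriv D1 1"
    "\<And>x. x \<in> sv_space \<Longrightarrow> D x = sv_add (D0 x) (D1 x)"
    using assms(1) by (auto simp: sv_derivation_def)
  then have "sv_linear D0" "sv_linear D1" by (simp_all add: sv_homog_deriv_def)
  then show ?thesis
    using D(3) assms(2,3) sv_lin_comb_in_sv_space[OF assms(2,3)]
    by (simp add: sv_linear_lin_comb) (simp add: sv_add_def sv_scale_def algebra_simps)
qed

lemma sv_derivation_in_sv_space:
  assumes "sv_derivation D" "x \<in> sv_space"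
  shows "D x \<in> sv_space"
proof -
  obtain D0 D1 where D: "sv_homog_deriv D0 0" "sv_homog_deriv D1 1"
    "\<And>x. x \<in> sv_space \<Longrightarrow> D x = sv_add (D0 x) (D1 x)"
    using assms(1) by (auto simp: sv_derivation_def)
  then have "D0 x \<in> sv_space" "D1 x \<in> sv_space"
    using assms(2) by (auto simp: sv_homog_deriv_def sv_linear_def)
  then have "sv_add (sv_scale 1 (D0 x)) (sv_scale 1 (D1 x)) \<in> sv_space"
    by (rule sv_lin_comb_in_sv_space)
  then show ?thesis using D(3) assms(2) by (simp add: sv_add_def sv_scale_def)
qed

lemma fst_sv_br_Lb:
  assumes "x \<in> sv_space"
  shows "fst (sv_br x (Lb j)) n = of_int (n - 2 * j) * fst x (n - j)"
proof -
  let ?S = "{i. fst x i \<noteq> 0}"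
  have "(\<Sum>i\<in>?S. fst x i * fst (Lb j) (n - i) * of_int (i - (n - i)))
      = (\<Sum>i\<in>?S. if i = n - j then fst x i * of_int (i - (n - i)) else 0)"
    by (rule sum.cong) (auto simp: Lb_def)
  also have "\<dots> = fst x (n - j) * of_int (n - 2 * j)"
    using sv_space_finite_support(1)[OF assms] by auto
  finally show ?thesis by (simp add: sv_br_def Lb_def)
qed

text \<open>Doubled, so that the coefficient n - 3j/2 of [G_{n-j}, L_j] stays integral.\<close>
lemma snd_sv_br_Lb:
  assumes "x \<in> sv_space"
  shows "2 * snd (sv_br x (Lb j)) n = of_int (2 * n - 3 * j) * snd x (n - j)"
proof -
  let ?S = "{r. snd x r \<noteq> 0}"
  have "(\<Sum>r\<in>?S. snd x r * fst (Lb j) (n - r) * (of_int r - of_int (n - r) / 2))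
      = (\<Sum>r\<in>?S. if r = n - j then snd x r * (of_int r - of_int (n - r) / 2) else 0)"
    by (rule sum.cong) (auto simp: Lb_def)
  also have "\<dots> = snd x (n - j) * (of_int (n - j) - of_int j / 2)"
    using sv_space_finite_support(2)[OF assms] by auto
  finally have "snd (sv_br x (Lb j)) n = snd x (n - j) * (of_int (n - j) - of_int j / 2)"
    by (simp add: sv_br_def Lb_def)
  then show ?thesis by (simp add: field_simps)
qed

lemma sv_br_L0_left:
  "sv_br (Lb 0) v = ((\<lambda>n. - of_int n * fst v n), (\<lambda>n. - of_int n * snd v n))"
proof -
  have "{i. fst (Lb 0) i \<noteq> 0} = {0}" "{i. snd (Lb 0) i \<noteq> 0} = {}" by (auto simp: Lb_def)
  then show ?thesis by (simp add: sv_br_def) (simp add: Lb_def mult.commute)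
qed

lemma sv_br_L0_Lb: "sv_br (Lb 0) (Lb j) = sv_scale (- of_int j) (Lb j)"
  by (simp add: sv_br_L0_left) (auto simp: sv_scale_def Lb_def)

lemma sv_homog_deriv_Lb:
  assumes "sv_homog_deriv E p"
  shows "of_int (n - j) * fst (E (Lb j)) n = of_int (n - 2 * j) * fst (E (Lb 0)) (n - j)"
    and "of_int (2 * (n - j)) * snd (E (Lb j)) n = of_int (2 * n - 3 * j) * snd (E (Lb 0)) (n - j)"
proof -
  have lin: "sv_linear E" using assms by (simp add: sv_homog_deriv_def)
  have "E (sv_br (Lb 0) (Lb j)) =
      sv_add (sv_br (E (Lb 0)) (Lb j)) (sv_scale ((-1) ^ (p * 0)) (sv_br (Lb 0) (E (Lb j))))"
    using assms Lb_in_sv_space unfolding sv_homog_deriv_def by (simp add: sv_homog_def Lb_def)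
  then have eq: "sv_scale (- of_int j) (E (Lb j)) =
      sv_add (sv_br (E (Lb 0)) (Lb j)) (sv_br (Lb 0) (E (Lb j)))"
    by (simp add: sv_br_L0_Lb sv_linear_scale[OF lin Lb_in_sv_space]) (simp add: sv_scale_def)
  have E0: "E (Lb 0) \<in> sv_space" by (rule sv_linear_in_sv_space[OF lin Lb_in_sv_space])
  have "- of_int j * fst (E (Lb j)) n =
      of_int (n - 2 * j) * fst (E (Lb 0)) (n - j) - of_int n * fst (E (Lb j)) n"
    using arg_cong[OF eq, of "\<lambda>x. fst x n"]
    by (simp add: sv_add_def sv_scale_def sv_br_L0_left fst_sv_br_Lb[OF E0])
  then show "of_int (n - j) * fst (E (Lb j)) n = of_int (n - 2 * j) * fst (E (Lb 0)) (n - j)"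
    by (simp add: algebra_simps)
  have "- of_int (2 * j) * snd (E (Lb j)) n =
      of_int (2 * n - 3 * j) * snd (E (Lb 0)) (n - j) - of_int (2 * n) * snd (E (Lb j)) n"
    using arg_cong[OF eq, of "\<lambda>x. 2 * snd x n"] snd_sv_br_Lb[OF E0, of j n]
    by (simp add: sv_add_def sv_scale_def sv_br_L0_left algebra_simps)
  then show "of_int (2 * (n - j)) * snd (E (Lb j)) n = of_int (2 * n - 3 * j) * snd (E (Lb 0)) (n - j)"
    by (simp add: algebra_simps)
qed

lemma sv_derivation_Lb:
  assumes "sv_derivation D"
  shows "of_int (n - j) * fst (D (Lb j)) n = of_int (n - 2 * j) * fst (D (Lb 0)) (n - j)"
    and "of_int (2 * (n - j)) * snd (D (Lb j)) n = of_int (2 * n - 3 * j) * snd (D (Lb 0)) (n - j)"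
proof -
  obtain D0 D1 where D: "sv_homog_deriv D0 0" "sv_homog_deriv D1 1"
    "\<And>x. x \<in> sv_space \<Longrightarrow> D x = sv_add (D0 x) (D1 x)"
    using assms by (auto simp: sv_derivation_def)
  show "of_int (n - j) * fst (D (Lb j)) n = of_int (n - 2 * j) * fst (D (Lb 0)) (n - j)"
    using sv_homog_deriv_Lb(1)[OF D(1), of n j] sv_homog_deriv_Lb(1)[OF D(2), of n j]
    by (simp add: D(3) Lb_in_sv_space sv_add_def distrib_left)
  show "of_int (2 * (n - j)) * snd (D (Lb j)) n = of_int (2 * n - 3 * j) * snd (D (Lb 0)) (n - j)"
    using sv_homog_deriv_Lb(2)[OF D(1), of n j] sv_homog_deriv_Lb(2)[OF D(2), of n j]
    by (simp add: D(3) Lb_in_sv_space sv_add_def distrib_left)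
qed

section \<open>Local derivations vanishing on L_0\<close>

lemma sv_local_derivation_pair:
  assumes "sv_local_derivation \<Delta>"
  obtains D where "sv_derivation D"
    "sv_add (sv_scale c1 (\<Delta> (Lb j1))) (sv_scale c2 (\<Delta> (Lb j2))) =
     sv_add (sv_scale c1 (D (Lb j1))) (sv_scale c2 (D (Lb j2)))"
proof -
  let ?x = "sv_add (sv_scale c1 (Lb j1)) (sv_scale c2 (Lb j2))"
  have "?x \<in> sv_space" by (intro sv_lin_comb_in_sv_space Lb_in_sv_space)
  then obtain D where D: "sv_derivation D" "\<Delta> ?x = D ?x"
    using assms by (auto simp: sv_local_derivation_def)
  have "sv_linear \<Delta>" using assms by (simp add: sv_local_derivation_def)
  then show ?thesis
    using that[OF D(1)] D(2)
    by (simp add: sv_linear_lin_comb sv_derivation_lin_comb[OF D(1)] Lb_in_sv_space)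
qed

lemma not_dvd_imp_add_mult_neq_0: "\<not> m dvd n \<Longrightarrow> n + j * m \<noteq> (0::int)"
  by (metis add.commute dvd_add_times_triv_left_iff dvd_0_right)

context
  fixes \<Delta> :: "sv \<Rightarrow> sv"
  assumes local_derivation: "sv_local_derivation \<Delta>" and Delta_L0: "\<Delta> (Lb 0) = sv_zero"
begin

lemma finite_support_Delta_Lb:
  "finite {n. fst (\<Delta> (Lb m)) n \<noteq> 0}" "finite {n. snd (\<Delta> (Lb m)) n \<noteq> 0}"
  using local_derivation Lb_in_sv_space
  by (simp_all add: sv_local_derivation_def sv_linear_in_sv_space sv_space_finite_support)

text \<open>From \<Delta>(L_0 + c L_m) = D(L_0 + c L_m), with u = D(L_0).\<close>
lemma Delta_Lb_recurrence:
  obtains u where "u \<in> sv_space"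
    "\<And>n. c * (of_int (n - m) * fst (\<Delta> (Lb m)) n) =
      of_int (n - m) * fst u n + c * of_int (n - 2 * m) * fst u (n - m)"
    "\<And>n. c * (of_int (2 * (n - m)) * snd (\<Delta> (Lb m)) n) =
      of_int (2 * (n - m)) * snd u n + c * of_int (2 * n - 3 * m) * snd u (n - m)"
proof -
  obtain D where D: "sv_derivation D"
    "sv_add (sv_scale 1 (\<Delta> (Lb 0))) (sv_scale c (\<Delta> (Lb m))) =
     sv_add (sv_scale 1 (D (Lb 0))) (sv_scale c (D (Lb m)))"
    using sv_local_derivation_pair[OF local_derivation] by blast
  have "D (Lb 0) \<in> sv_space" by (rule sv_derivation_in_sv_space[OF D(1) Lb_in_sv_space])
  moreover have "c * (of_int (n - m) * fst (\<Delta> (Lb m)) n) =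
      of_int (n - m) * fst (D (Lb 0)) n + c * of_int (n - 2 * m) * fst (D (Lb 0)) (n - m)"
    and "c * (of_int (2 * (n - m)) * snd (\<Delta> (Lb m)) n) =
      of_int (2 * (n - m)) * snd (D (Lb 0)) n + c * of_int (2 * n - 3 * m) * snd (D (Lb 0)) (n - m)"
    for n
  proof -
    have "c * fst (\<Delta> (Lb m)) n = fst (D (Lb 0)) n + c * fst (D (Lb m)) n"
      "c * snd (\<Delta> (Lb m)) n = snd (D (Lb 0)) n + c * snd (D (Lb m)) n"
      using arg_cong[OF D(2), of "\<lambda>x. fst x n"] arg_cong[OF D(2), of "\<lambda>x. snd x n"]
      by (simp_all add: Delta_L0 sv_zero_def sv_add_def sv_scale_def)
    with sv_derivation_Lb[OF D(1), of n m]
    show "c * (of_int (n - m) * fst (\<Delta> (Lb m)) n) =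
        of_int (n - m) * fst (D (Lb 0)) n + c * of_int (n - 2 * m) * fst (D (Lb 0)) (n - m)"
      and "c * (of_int (2 * (n - m)) * snd (\<Delta> (Lb m)) n) =
        of_int (2 * (n - m)) * snd (D (Lb 0)) n + c * of_int (2 * n - 3 * m) * snd (D (Lb 0)) (n - m)"
      by algebra+
  qed
  ultimately show ?thesis by (rule that)
qed

text \<open>From \<Delta>(c L_m + L_2m) = D(c L_m + L_2m), with u = D(L_0).\<close>
lemma Delta_Lb_double_recurrence:
  obtains u where "u \<in> sv_space"
    "\<And>n. c * (of_int (2 * (n - m) * (n - 2 * m)) * snd (\<Delta> (Lb m)) n)
        + of_int (2 * (n - m) * (n - 2 * m)) * snd (\<Delta> (Lb (2 * m))) n =
      of_int ((n - m) * (2 * n - 6 * m)) * snd u (n - 2 * m)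
        + c * of_int ((n - 2 * m) * (2 * n - 3 * m)) * snd u (n - m)"
proof -
  obtain D where D: "sv_derivation D"
    "sv_add (sv_scale c (\<Delta> (Lb m))) (sv_scale 1 (\<Delta> (Lb (2 * m)))) =
     sv_add (sv_scale c (D (Lb m))) (sv_scale 1 (D (Lb (2 * m))))"
    using sv_local_derivation_pair[OF local_derivation] by blast
  have "D (Lb 0) \<in> sv_space" by (rule sv_derivation_in_sv_space[OF D(1) Lb_in_sv_space])
  moreover have "c * (of_int (2 * (n - m) * (n - 2 * m)) * snd (\<Delta> (Lb m)) n)
        + of_int (2 * (n - m) * (n - 2 * m)) * snd (\<Delta> (Lb (2 * m))) n =
      of_int ((n - m) * (2 * n - 6 * m)) * snd (D (Lb 0)) (n - 2 * m)
        + c * of_int ((n - 2 * m) * (2 * n - 3 * m)) * snd (D (Lb 0)) (n - m)" for n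
  proof -
    have "c * snd (\<Delta> (Lb m)) n + snd (\<Delta> (Lb (2 * m))) n =
        c * snd (D (Lb m)) n + snd (D (Lb (2 * m))) n"
      using arg_cong[OF D(2), of "\<lambda>x. snd x n"] by (simp add: sv_add_def sv_scale_def)
    with sv_derivation_Lb(2)[OF D(1), of n m] sv_derivation_Lb(2)[OF D(1), of n "2 * m"]
    show ?thesis unfolding of_int_mult of_int_diff of_int_numeral by algebra
  qed
  ultimately show ?thesis by (rule that)
qed

lemma fst_Delta_Lb_vanishes:
  assumes "m \<noteq> 0" "\<not> m dvd n"
  shows "fst (\<Delta> (Lb m)) n = 0"
proof (rule parametric_recurrence_vanishes_progression
    [where m = m and a = "\<lambda>k. k - m" and b = "\<lambda>k. k - 2 * m"], goal_cases)
  case 1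
  show ?case by (rule finite_support_Delta_Lb)
next
  case 2
  show ?case by (rule assms(1))
next
  case (3 j)
  show ?case using not_dvd_imp_add_mult_neq_0[OF assms(2), of "j - 1"] by (simp add: algebra_simps)
next
  case (4 j)
  show ?case using not_dvd_imp_add_mult_neq_0[OF assms(2), of "j - 2"] by (simp add: algebra_simps)
next
  case (5 c)
  obtain u where "u \<in> sv_space" "\<And>k. c * (of_int (k - m) * fst (\<Delta> (Lb m)) k) =
      of_int (k - m) * fst u k + c * of_int (k - 2 * m) * fst u (k - m)"
    using Delta_Lb_recurrence[of c m] by metis
  then show ?case by (intro exI[of _ "fst u"]) (simp add: sv_space_finite_support)
qed

text \<open>The hypothesis excludes the one class on which the odd recurrence coefficient
  2n - 3m can vanish.\<close>
lemma snd_Delta_Lb_vanishes: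
  assumes "m \<noteq> 0" "\<not> m dvd n" "\<And>j. 2 * (n + j * m) \<noteq> 3 * m"
  shows "snd (\<Delta> (Lb m)) n = 0"
proof (rule parametric_recurrence_vanishes_progression
    [where m = m and a = "\<lambda>k. 2 * (k - m)" and b = "\<lambda>k. 2 * k - 3 * m"], goal_cases)
  case 1
  show ?case by (rule finite_support_Delta_Lb)
next
  case 2
  show ?case by (rule assms(1))
next
  case (3 j)
  show ?case using not_dvd_imp_add_mult_neq_0[OF assms(2), of "j - 1"] by (simp add: algebra_simps)
next
  case (4 j)
  show ?case using assms(3)[of j] by (simp add: algebra_simps)
next
  case (5 c)
  obtain u where "u \<in> sv_space" "\<And>k. c * (of_int (2 * (k - m)) * snd (\<Delta> (Lb m)) k) =
      of_int (2 * (k - m)) * snd u k + c * of_int (2 * k - 3 * m) * snd u (k - m)"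
    using Delta_Lb_recurrence[of c m] by metis
  then show ?case by (intro exI[of _ "snd u"]) (simp add: sv_space_finite_support)
qed

text \<open>At n = 3m/2 the odd recurrence has no link to n - m, so it starts there.\<close>
lemma snd_Delta_Lb_vanishes_above:
  assumes "t \<noteq> 0"
  shows "snd (\<Delta> (Lb (2 * t))) (t * (3 + 2 * int k)) = 0"
proof -
  let ?m = "2 * t" and ?n = "\<lambda>k::nat. t * (3 + 2 * int k)"
  let ?\<alpha> = "\<lambda>k. of_int (2 * (?n k - ?m)) :: complex"
  let ?\<beta> = "\<lambda>k. of_int (2 * ?n k - 3 * ?m) :: complex"
  have factor: "2 * (?n k - ?m) = t * (2 + 4 * int k)" "2 * ?n (Suc k) - 3 * ?m = t * (4 + 4 * int k)"
    "2 * ?n 0 - 3 * ?m = 0" "?n (Suc k) - ?m = ?n k" for k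
    by (simp_all add: algebra_simps)
  have nonzero: "?\<alpha> k \<noteq> 0" "?\<beta> (Suc k) \<noteq> 0" for k
    unfolding factor of_int_eq_0_iff using assms by simp_all
  have "inj ?n" using assms by (auto simp: inj_def)
  have "?\<alpha> k * snd (\<Delta> (Lb ?m)) (?n k) = 0"
  proof (rule parametric_recurrence_vanishes_nat[where \<alpha> = ?\<alpha> and \<beta> = ?\<beta>], goal_cases)
    case 1
    have "finite {k. snd (\<Delta> (Lb ?m)) (?n k) \<noteq> 0}"
      by (rule finite_nonzero_comp_inj[OF finite_support_Delta_Lb(2) \<open>inj ?n\<close>])
    then show ?case by (rule rev_finite_subset) auto
  next
    case (2 k)
    show ?case by (rule nonzero(1))
  next
    case (3 k)
    show ?case by (rule nonzero(2))
  next
    case (4 c)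
    obtain u where u: "u \<in> sv_space"
      and rec: "\<And>n. c * (of_int (2 * (n - ?m)) * snd (\<Delta> (Lb ?m)) n) =
        of_int (2 * (n - ?m)) * snd u n + c * of_int (2 * n - 3 * ?m) * snd u (n - ?m)"
      using Delta_Lb_recurrence[of c ?m] by metis
    show ?case
    proof (intro exI[of _ "\<lambda>k. snd u (?n k)"] conjI allI, goal_cases)
      case 1
      show ?case by (rule finite_nonzero_comp_inj[OF sv_space_finite_support(2)[OF u] \<open>inj ?n\<close>])
    next
      case 2
      show ?case using rec[of "?n 0"] unfolding factor(3) by simp
    next
      case (3 k)
      show ?case using rec[of "?n (Suc k)"] unfolding factor(4) .
    qed
  qed
  then show ?thesis using nonzero(1) by simp
qed

text \<open>Below 3m/2 the recurrence for L_m alone cannot be started, so it is combined with the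
  one for L_2m, whose odd coefficients on this class vanish by the generic case.\<close>
lemma snd_Delta_Lb_vanishes_below:
  assumes "t \<noteq> 0"
  shows "snd (\<Delta> (Lb (2 * t))) (t * (3 - 2 * int k)) = 0"
proof -
  let ?m = "2 * t" and ?n = "\<lambda>k::nat. t * (3 - 2 * int k)"
  let ?\<rho> = "\<lambda>k. of_int (2 * (?n k - ?m) * (?n k - 2 * ?m)) :: complex"
  let ?\<alpha> = "\<lambda>k. of_int ((?n k - ?m) * (2 * ?n k - 6 * ?m)) :: complex"
  let ?\<beta> = "\<lambda>k. of_int ((?n k - 2 * ?m) * (2 * ?n k - 3 * ?m)) :: complex"
  have factor:
    "2 * (?n k - ?m) * (?n k - 2 * ?m) = t * t * (2 * (1 - 2 * int k) * (- 1 - 2 * int k))"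
    "(?n k - ?m) * (2 * ?n k - 6 * ?m) = t * t * ((1 - 2 * int k) * (- 6 - 4 * int k))"
    "(?n (Suc k) - 2 * ?m) * (2 * ?n (Suc k) - 3 * ?m) =
      t * t * ((- 3 - 2 * int k) * (- 4 - 4 * int k))"
    "?n (Suc k) - ?m = ?n k - 2 * ?m" for k
    by (simp_all add: algebra_simps)
  have nonzero: "?\<rho> k \<noteq> 0" "?\<alpha> k \<noteq> 0" "?\<beta> (Suc k) \<noteq> 0" for k
    unfolding factor of_int_eq_0_iff using assms by simp_all presburger+
  have L2m_vanishes: "snd (\<Delta> (Lb (2 * ?m))) (?n k) = 0" for k
  proof (rule snd_Delta_Lb_vanishes)
    show "2 * ?m \<noteq> 0" using assms by simp
    have "\<not> 4 dvd 3 - 2 * int k" by presburger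
    then show "\<not> 2 * ?m dvd ?n k" using assms by (simp add: mult.commute[of 2] mult.assoc)
    show "2 * (?n k + j * (2 * ?m)) \<noteq> 3 * (2 * ?m)" for j
    proof -
      have "6 - 4 * int k + 8 * j \<noteq> 12" by presburger
      then have "t * (6 - 4 * int k + 8 * j) \<noteq> t * 12" using assms by simp
      then show ?thesis by (simp add: algebra_simps)
    qed
  qed
  have "inj ?n" using assms by (auto simp: inj_def)
  then have inj_shifted: "inj (\<lambda>k. ?n k - 2 * ?m)" by (simp add: inj_def)
  have "?\<rho> k * snd (\<Delta> (Lb ?m)) (?n k) = 0"
  proof (rule parametric_recurrence_vanishes_nat[where \<alpha> = ?\<alpha> and \<beta> = ?\<beta>], goal_cases)
    case 1
    have "finite {k. snd (\<Delta> (Lb ?m)) (?n k) \<noteq> 0}"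
      by (rule finite_nonzero_comp_inj[OF finite_support_Delta_Lb(2) \<open>inj ?n\<close>])
    then show ?case by (rule rev_finite_subset) auto
  next
    case (2 k)
    show ?case by (rule nonzero(2))
  next
    case (3 k)
    show ?case by (rule nonzero(3))
  next
    case (4 c)
    obtain u where u: "u \<in> sv_space"
      and rec: "\<And>n. c * (of_int (2 * (n - ?m) * (n - 2 * ?m)) * snd (\<Delta> (Lb ?m)) n)
          + of_int (2 * (n - ?m) * (n - 2 * ?m)) * snd (\<Delta> (Lb (2 * ?m))) n =
        of_int ((n - ?m) * (2 * n - 6 * ?m)) * snd u (n - 2 * ?m)
          + c * of_int ((n - 2 * ?m) * (2 * n - 3 * ?m)) * snd u (n - ?m)"
      using Delta_Lb_double_recurrence[of c ?m] by metis
    have rec': "c * (?\<rho> k * snd (\<Delta> (Lb ?m)) (?n k)) =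
        ?\<alpha> k * snd u (?n k - 2 * ?m) + c * ?\<beta> k * snd u (?n k - ?m)" for k
      using rec[of "?n k"] L2m_vanishes[of k] by simp
    show ?case
    proof (intro exI[of _ "\<lambda>k. snd u (?n k - 2 * ?m)"] conjI allI, goal_cases)
      case 1
      show ?case
        by (rule finite_nonzero_comp_inj[OF sv_space_finite_support(2)[OF u] inj_shifted])
    next
      case 2
      show ?case using rec'[of 0] by simp
    next
      case (3 k)
      show ?case using rec'[of "Suc k"] unfolding factor(4) .
    qed
  qed
  then show ?thesis using nonzero(1) by simp
qed

end

theorem lemma3p1:
  fixes \<Delta> :: "sv \<Rightarrow> sv" and m :: int
  assumes "sv_local_derivation \<Delta>"
    and "\<Delta> (Lb 0) = sv_zero"
    and "m \<noteq> 0"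
  shows "\<forall>n. \<not> m dvd n \<longrightarrow> fst (\<Delta> (Lb m)) n = 0 \<and> snd (\<Delta> (Lb m)) n = 0"
proof (intro allI impI conjI)
  fix n assume not_dvd: "\<not> m dvd n"
  show "fst (\<Delta> (Lb m)) n = 0" by (rule fst_Delta_Lb_vanishes[OF assms not_dvd])
  show "snd (\<Delta> (Lb m)) n = 0"
  proof (cases "\<forall>j. 2 * (n + j * m) \<noteq> 3 * m")
    case True
    then show ?thesis using snd_Delta_Lb_vanishes[OF assms not_dvd] by blast
  next
    case False
    then obtain j where j: "2 * (n + j * m) = 3 * m" by blast
    then have "even (3 * m)" by (metis dvd_triv_left)
    then obtain t where t: "m = 2 * t" by auto
    have "2 * n = 2 * (t * (3 - 2 * j))" using j unfolding t by (simp add: algebra_simps)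
    then have n: "n = t * (3 - 2 * j)" and "t \<noteq> 0" using assms(3) t by simp_all
    show ?thesis
    proof (cases "j \<ge> 0")
      case True
      then have "n = t * (3 - 2 * int (nat j))" using n by simp
      then show ?thesis
        unfolding t by (simp only: snd_Delta_Lb_vanishes_below[OF assms(1,2) \<open>t \<noteq> 0\<close>])
    next
      case False
      then have "n = t * (3 + 2 * int (nat (- j)))" using n by simp
      then show ?thesis
        unfolding t by (simp only: snd_Delta_Lb_vanishes_above[OF assms(1,2) \<open>t \<noteq> 0\<close>])
    qed
  qed
qed

end
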